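(* For any values of $k$, $\mu$, and for $\lambda\neq0$, \[ \,_{2}\tilde{F}_{3}\left(\tfrac{1}{2},\tfrac{1}{2};\lambda+1,1-\mu,\mu+1;-k^{2}\right) =\sum_{L=0}^{\infty}\frac{(-1)^{2L}k^{4L}2^{2L+2\lambda+1}(2L+\lambda)\Gamma\left(L+\frac{1}{2}\right)\Gamma\left(\lambda+\frac{1}{2}\right)\left(\left(\lambda+\frac{1}{2}\right)_{2L}\right)^{2}\Gamma(2L+\lambda+1)^{2}\Gamma(2L+2\lambda)}{\pi\,\Gamma(L+1)\Gamma(4L+2\lambda+1)^{2}} \,_{1}\tilde{F}_{2}\left(L+\tfrac{1}{2};2L+\lambda+1,L-\mu+1;-\tfrac{k^{2}}{4}\right)\,_{1}\tilde{F}_{2}\left(L+\tfrac{1}{2};2L+\lambda+1,L+\mu+1;-\tfrac{k^{2}}{4}\right). \]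
   Context: $\,_{p}F_{q}(a_1,\dots,a_p;b_1,\dots,b_q;z)=\sum_{n\ge0}\frac{(a_1)_n\cdots(a_p)_n}{(b_1)_n\cdots(b_q)_n}\frac{z^n}{n!}$ is the generalized hypergeometric function, with $(c)_n=\Gamma(c+n)/\Gamma(c)$ the Pochhammer symbol. The regularized hypergeometric function is $\,_{p}\tilde{F}_{q}(a_1,\dots,a_p;b_1,\dots,b_q;z)=\,_{p}F_{q}(a_1,\dots,a_p;b_1,\dots,b_q;z)/(\Gamma(b_1)\cdots\Gamma(b_q))$ (understood by continuity, as an entire function of the $b_j$, when some $b_j$ is a nonpositive integer). *)

theory Defs
  imports "HOL-Analysis.Analysis"
begin

text \<open>Regularized generalized hypergeometric function
  pFq~(as; bs; z) = sum_n prod_i (a_i)_n * prod_j 1/Gamma(b_j+n) * z^n / n!,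
  using the entire reciprocal Gamma function rGamma, which gives the
  continuous extension at nonpositive integer b_j.\<close>
definition hyperpFq_reg :: "complex list \<Rightarrow> complex list \<Rightarrow> complex \<Rightarrow> complex" where
  "hyperpFq_reg as bs z =
     (\<Sum>n. (\<Prod>a\<leftarrow>as. pochhammer a n) * (\<Prod>b\<leftarrow>bs. rGamma (b + of_nat n))
            * z ^ n / of_nat (fact n))"

end

(*
  Write u = -k^2/4 and expand both 1F2 factors as power series in u.  The right-hand side
  becomes an absolutely convergent triple series over (L, i, j).  Grouped by p = L + i and
  q = L + j, the coefficient of u^(p+q) is a finite sum over L which is a terminating
  very-well-poised 5F4, evaluated by Dougall's formula.
  Grouping once more by n = p + q, what remains is the convolution
  sum_(p+q=n) 1/(Gamma(1-mu+p) Gamma(1+mu+q) p! q!), which Vandermonde's identity turns into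
  the n-th coefficient of the 2F3.  The Gamma factors in the stated coefficients collapse by
  Legendre's duplication formula.
*)

theory Submission
  imports Defs
begin

lemma pochhammer_half_nonzero: "pochhammer (1/2 :: 'a :: field_char_0) n \<noteq> 0"
  using fact_double[of n, where 'a='a] by auto

lemma half_plus_of_nat_nonzero: "(1/2 + of_nat n :: 'a :: field_char_0) \<noteq> 0"
  using pochhammer_half_nonzero[of "Suc n", where 'a='a] by (simp add: pochhammer_Suc)

lemma of_nat_add_one_nonzero: "(of_nat n + 1 :: 'a :: semiring_char_0) \<noteq> 0"
  by (metis add.commute of_nat_Suc of_nat_neq_0)

lemma add_of_nat_notin_nonpos_Ints:
  fixes z :: "'a :: ring_1"
  assumes "z \<notin> \<int>\<^sub>\<le>\<^sub>0"
  shows "z + of_nat n \<notin> \<int>\<^sub>\<le>\<^sub>0"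
  using nonpos_Ints_diff_Nats[of "z + of_nat n" "of_nat n"] assms by auto

lemma add_half_of_nat_notin_nonpos_Ints:
  fixes z :: "'a :: field_char_0"
  assumes "2 * z \<notin> \<int>\<^sub>\<le>\<^sub>0"
  shows "z + of_nat n / 2 \<notin> \<int>\<^sub>\<le>\<^sub>0"
proof
  assume "z + of_nat n / 2 \<in> \<int>\<^sub>\<le>\<^sub>0"
  then have "(z + of_nat n / 2) * 2 - of_nat n \<in> \<int>\<^sub>\<le>\<^sub>0"
    by (intro nonpos_Ints_diff_Nats nonpos_Ints_mult_Nats) auto
  with assms show False
    by (simp add: algebra_simps)
qed

lemma fact_diff_mult_pochhammer_minus:
  assumes "k \<le> n"
  shows "fact (n - k) * pochhammer (- of_nat n) k = ((-1) ^ k * fact n :: 'a :: field_char_0)"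
proof -
  have "(fact n :: 'a) = fact (n - k) * pochhammer (of_nat (n - k) + 1) k"
    using pochhammer_product[of "n - k" n "1 :: 'a"] assms by (simp add: pochhammer_fact add_ac)
  moreover have "of_nat n - of_nat k + 1 = (of_nat (n - k) + 1 :: 'a)"
    using assms by (simp add: of_nat_diff)
  ultimately show ?thesis
    by (simp add: pochhammer_minus)
qed

lemma fact_diff_mult_fact_diff:
  assumes "L \<le> p" "L \<le> q"
  shows "fact (p - L) * fact (q - L)
    = (fact p * fact q / (pochhammer (- of_nat p) L * pochhammer (- of_nat q) L) :: 'a :: field_char_0)"
proof -
  have "fact (p - L) * fact (q - L) * (pochhammer (- of_nat p) L * pochhammer (- of_nat q :: 'a) L)
      = (fact (p - L) * pochhammer (- of_nat p) L) * (fact (q - L) * pochhammer (- of_nat q) L)"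
    by (simp only: ac_simps)
  also have "\<dots> = ((-1) * (-1)) ^ L * (fact p * fact q)"
    using assms by (simp add: fact_diff_mult_pochhammer_minus power_mult_distrib)
  finally show ?thesis
    using assms by (simp add: field_simps pochhammer_of_nat_eq_0_iff)
qed

section \<open>Dougall's terminating very-well-poised sum\<close>

definition dougall_coeff :: "'a :: field_char_0 \<Rightarrow> nat \<Rightarrow> nat \<Rightarrow> nat \<Rightarrow> 'a" where
  "dougall_coeff a p q L =
     pochhammer a L * pochhammer (a + 1/2) L * pochhammer (- of_nat p) L * pochhammer (- of_nat q) L
     / (fact L * pochhammer (1/2) L * pochhammer a (L + p + 1) * pochhammer a (L + q + 1))"

definition dougall_term :: "'a :: field_char_0 \<Rightarrow> nat \<Rightarrow> nat \<Rightarrow> nat \<Rightarrow> 'a" where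
  "dougall_term a p q L = (a + 2 * of_nat L) * dougall_coeff a p q L"

definition dougall_certificate :: "'a :: field_char_0 \<Rightarrow> nat \<Rightarrow> nat \<Rightarrow> nat \<Rightarrow> 'a" where
  "dougall_certificate a p q L = - of_nat L * (2 * of_nat L - 1) * (a + of_nat L + of_nat q)
       * (a + of_nat L + of_nat p + 1) * (dougall_coeff a (Suc p) q L / (of_nat p + 1))"

text \<open>Up to the factor a / ((a)_(p+1) (a)_(q+1)), \<^term>\<open>dougall_term a p q L\<close> is the L-th term of the
  terminating very-well-poised 5F4(a, 1 + a/2, a + 1/2, -p, -q; a/2, 1/2, a + p + 1, a + q + 1; 1),
  and \<^const>\<open>dougall_certificate\<close> is a WZ certificate for it in the variable p.\<close>

lemma dougall_coeff_eq_0: "p < L \<or> q < L \<Longrightarrow> dougall_coeff a p q L = 0"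
  by (auto simp: dougall_coeff_def pochhammer_of_nat_eq_0_lemma)

context
  fixes a :: "'a :: field_char_0"
  assumes a: "a \<notin> \<int>\<^sub>\<le>\<^sub>0"
begin

lemma add_of_nat_nonzero: "a + of_nat n \<noteq> 0"
  using a plus_of_nat_eq_0_imp by blast

lemma add_of_nat_add_one_nonzero: "a + of_nat m + of_nat n + 1 \<noteq> 0"
  using add_of_nat_nonzero[of "m + n + 1"] by (simp add: add_ac)

lemma pochhammer_nonzero: "pochhammer a n \<noteq> 0"
  using a by (auto simp: pochhammer_eq_0_iff)

lemma dougall_coeff_Suc_left:
  "dougall_coeff a p q L * (of_nat p + 1)
     = dougall_coeff a (Suc p) q L * (of_nat p + 1 - of_nat L) * (a + of_nat L + of_nat p + 1)"
proof -
  define N where "N = pochhammer a L * pochhammer (a + 1/2) L * pochhammer (- of_nat q) L"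
  define D where "D = fact L * pochhammer (1/2) L * pochhammer a (L + q + 1)"
  define P where "P = pochhammer a (L + p + 1)"
  define c where "c = a + of_nat L + of_nat p + 1"
  define X where "X = pochhammer (- of_nat p :: 'a) L"
  define X' where "X' = pochhammer (- of_nat (Suc p) :: 'a) L"
  have nonzero: "D \<noteq> 0" "P \<noteq> 0" "c \<noteq> 0"
    unfolding D_def P_def c_def
    using pochhammer_half_nonzero[where 'a='a] pochhammer_nonzero add_of_nat_nonzero[of "L + p + 1"]
    by (auto simp: add_ac)
  have coeff: "dougall_coeff a p q L = N * X / (D * P)"
    unfolding dougall_coeff_def N_def D_def P_def X_def by (simp add: ac_simps)
  have coeff_Suc: "dougall_coeff a (Suc p) q L = N * X' / (D * (P * c))"
    unfolding dougall_coeff_def N_def D_def P_def c_def X'_def by (simp add: pochhammer_Suc ac_simps)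
  have absorb: "(of_nat p + 1 - of_nat L) * X' = (of_nat p + 1) * X"
    using pochhammer_absorb_comp[of "of_nat (Suc p) :: 'a" L] unfolding X_def X'_def
    by (simp add: algebra_simps)
  show ?thesis
    unfolding coeff coeff_Suc c_def[symmetric] using nonzero absorb
    by (simp add: field_simps)
qed

lemma dougall_coeff_Suc:
  "dougall_coeff a p q (Suc L) = dougall_coeff a p q L
     * ((a + of_nat L) * (a + 1/2 + of_nat L) * (of_nat L - of_nat p) * (of_nat L - of_nat q))
     / ((of_nat L + 1) * (1/2 + of_nat L) * (a + of_nat L + of_nat p + 1) * (a + of_nat L + of_nat q + 1))"
proof -
  define N where "N = pochhammer a L * pochhammer (a + 1/2) L * pochhammer (- of_nat p) L * pochhammer (- of_nat q) L"
  define D where "D = fact L * pochhammer (1/2) L * pochhammer a (L + p + 1) * pochhammer a (L + q + 1)"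
  define X where "X = (a + of_nat L) * (a + 1/2 + of_nat L) * (of_nat L - of_nat p) * (of_nat L - of_nat q)"
  define Y where "Y = (of_nat L + 1) * (1/2 + of_nat L) * (a + of_nat L + of_nat p + 1) * (a + of_nat L + of_nat q + 1)"
  have nonzero: "D \<noteq> 0" "Y \<noteq> 0"
    unfolding D_def Y_def
    using pochhammer_half_nonzero[where 'a='a] pochhammer_nonzero half_plus_of_nat_nonzero[of L, where 'a='a]
      add_of_nat_add_one_nonzero of_nat_add_one_nonzero[of L, where 'a='a]
    by (auto simp flip: of_nat_Suc)
  have "dougall_coeff a p q L = N / D"
    unfolding dougall_coeff_def N_def D_def ..
  moreover have "dougall_coeff a p q (Suc L) = (N * X) / (D * Y)"
  proof -
    have "pochhammer (- of_nat p) (Suc L) = pochhammer (- of_nat p) L * (of_nat L - of_nat p :: 'a)"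
      "pochhammer (- of_nat q) (Suc L) = pochhammer (- of_nat q) L * (of_nat L - of_nat q :: 'a)"
      by (simp_all add: pochhammer_Suc)
    moreover have "pochhammer a (Suc L) = pochhammer a L * (a + of_nat L)"
      "pochhammer (a + 1/2) (Suc L) = pochhammer (a + 1/2) L * (a + 1/2 + of_nat L)"
      "fact (Suc L) = fact L * (of_nat L + 1 :: 'a)"
      "pochhammer (1/2) (Suc L) = pochhammer (1/2) L * (1/2 + of_nat L :: 'a)"
      "pochhammer a (Suc L + p + 1) = pochhammer a (L + p + 1) * (a + of_nat L + of_nat p + 1)"
      "pochhammer a (Suc L + q + 1) = pochhammer a (L + q + 1) * (a + of_nat L + of_nat q + 1)"
      by (simp_all add: pochhammer_Suc algebra_simps)
    ultimately show ?thesis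
      unfolding dougall_coeff_def N_def D_def X_def Y_def by (simp only: mult_ac)
  qed
  ultimately show ?thesis
    unfolding X_def[symmetric] Y_def[symmetric] mult.assoc[symmetric] using nonzero by simp
qed

lemma dougall_certificate_Suc:
  "dougall_certificate a p q (Suc L) = - (a + of_nat L) * (2 * a + 2 * of_nat L + 1) * (of_nat p + 1 - of_nat L)
     * (of_nat q - of_nat L) * (dougall_coeff a (Suc p) q L / (of_nat p + 1))"
proof -
  define X where "X = (a + of_nat L) * (a + 1/2 + of_nat L) * (of_nat L - of_nat (Suc p)) * (of_nat L - of_nat q)"
  define Y where "Y = (of_nat L + 1) * (1/2 + of_nat L) * (a + of_nat L + of_nat (Suc p) + 1) * (a + of_nat L + of_nat q + 1)"
  have "Y \<noteq> 0"
    unfolding Y_def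
    using half_plus_of_nat_nonzero[of L, where 'a='a] add_of_nat_add_one_nonzero of_nat_add_one_nonzero[of L, where 'a='a]
    by (simp del: of_nat_Suc)
  have "- of_nat (Suc L) * (2 * of_nat (Suc L) - 1) * (a + of_nat (Suc L) + of_nat q)
      * (a + of_nat (Suc L) + of_nat p + 1) = - (2 * Y)"
    unfolding Y_def by (simp add: field_simps)
  then have "dougall_certificate a p q (Suc L) = - (2 * Y) * (dougall_coeff a (Suc p) q L * X / Y / (of_nat p + 1))"
    unfolding dougall_certificate_def dougall_coeff_Suc X_def[symmetric] Y_def[symmetric] by simp
  also have "\<dots> = - (2 * X) * (dougall_coeff a (Suc p) q L / (of_nat p + 1))"
    using \<open>Y \<noteq> 0\<close> by simp
  also have "2 * X = (a + of_nat L) * (2 * a + 2 * of_nat L + 1) * (of_nat p + 1 - of_nat L) * (of_nat q - of_nat L)"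
    unfolding X_def by (simp add: field_simps)
  finally show ?thesis
    by (simp only: mult.assoc mult_minus_left)
qed

lemma dougall_term_WZ:
  "(2 * of_nat p + 1) * (a + of_nat p + of_nat q + 1) * dougall_term a (Suc p) q L
     - (2 * of_nat p + 2 * of_nat q + 1) * dougall_term a p q L
   = dougall_certificate a p q (Suc L) - dougall_certificate a p q L"
proof -
  define B where "B = dougall_coeff a (Suc p) q L / (of_nat p + 1)"
  have p1: "(of_nat p + 1 :: 'a) \<noteq> 0"
    by (rule of_nat_add_one_nonzero)
  have coeff_Suc: "dougall_coeff a (Suc p) q L = B * (of_nat p + 1)"
    unfolding B_def using p1 by simp
  have coeff: "dougall_coeff a p q L = B * (of_nat p + 1 - of_nat L) * (a + of_nat L + of_nat p + 1)"
    using dougall_coeff_Suc_left[of p q L] p1 unfolding B_def by (simp add: field_simps)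
  show ?thesis
    unfolding dougall_term_def dougall_certificate_Suc dougall_certificate_def[of a p q L] B_def[symmetric]
    unfolding coeff coeff_Suc by (simp add: algebra_simps)
qed

lemma sum_dougall_term_Suc:
  "(2 * of_nat p + 1) * (a + of_nat p + of_nat q + 1) * (\<Sum>L\<le>q. dougall_term a (Suc p) q L)
     = (2 * of_nat p + 2 * of_nat q + 1) * (\<Sum>L\<le>q. dougall_term a p q L)"
proof -
  have "(2 * of_nat p + 1) * (a + of_nat p + of_nat q + 1) * (\<Sum>L\<le>q. dougall_term a (Suc p) q L)
      - (2 * of_nat p + 2 * of_nat q + 1) * (\<Sum>L\<le>q. dougall_term a p q L)
      = (\<Sum>L<Suc q. dougall_certificate a p q (Suc L) - dougall_certificate a p q L)"
    unfolding sum_distrib_left sum_subtractf[symmetric] lessThan_Suc_atMost dougall_term_WZ ..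
  also have "\<dots> = 0"
    unfolding sum_lessThan_telescope by (simp add: dougall_certificate_def dougall_coeff_eq_0)
  finally show ?thesis
    by simp
qed

theorem sum_dougall_term:
  "(\<Sum>L\<le>q. dougall_term a p q L)
     = pochhammer (1/2) (p + q) / (pochhammer (1/2) p * pochhammer (1/2) q * pochhammer a (p + q + 1))"
  (is "_ = ?R p")
proof (induction p)
  case 0
  have "(\<Sum>L\<le>q. dougall_term a 0 q L) = (\<Sum>L\<in>{0}. dougall_term a 0 q L)"
    by (rule sum.mono_neutral_right) (auto simp: dougall_term_def dougall_coeff_eq_0)
  also have "\<dots> = 1 / pochhammer a (q + 1)"
    using add_of_nat_nonzero[of 0] by (simp add: dougall_term_def dougall_coeff_def pochhammer_1)
  finally show ?case
    using pochhammer_half_nonzero[of q, where 'a='a] by simp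
next
  case (Suc p)
  define c where "c = (2 * of_nat p + 1) * (a + of_nat p + of_nat q + 1 :: 'a)"
  have "c \<noteq> 0"
    using of_nat_add_one_nonzero[of "2 * p", where 'a='a] add_of_nat_add_one_nonzero[of p q]
    unfolding c_def by simp
  have "c * (\<Sum>L\<le>q. dougall_term a (Suc p) q L) = (2 * of_nat p + 2 * of_nat q + 1) * ?R p"
    unfolding c_def sum_dougall_term_Suc Suc.IH ..
  then have "(\<Sum>L\<le>q. dougall_term a (Suc p) q L) = (2 * of_nat p + 2 * of_nat q + 1) * ?R p / c"
    using \<open>c \<noteq> 0\<close> by (metis nonzero_mult_div_cancel_left)
  also have "\<dots> = ?R (Suc p)"
  proof -
    define N :: 'a where "N = pochhammer (1/2) (p + q)"
    define D where "D = pochhammer (1/2) p * pochhammer (1/2) q * pochhammer a (p + q + 1)"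
    have "D \<noteq> 0"
      unfolding D_def using pochhammer_half_nonzero[where 'a='a] pochhammer_nonzero by simp
    have "?R (Suc p) = (N * (2 * of_nat p + 2 * of_nat q + 1) / 2) / (D * c / 2)"
      unfolding N_def D_def c_def by (simp add: pochhammer_Suc field_simps)
    then show ?thesis
      using \<open>D \<noteq> 0\<close> \<open>c \<noteq> 0\<close> unfolding N_def[symmetric] D_def[symmetric] by simp
  qed
  finally show ?case .
qed

end

section \<open>Legendre duplication and the expansion coefficients\<close>

lemma complex_two_powr: "(2 :: complex) powr w = exp (w * of_real (ln 2))"
  using Ln_of_real[of 2] by (simp add: powr_def mult.commute)

lemma Gamma_legendre_duplication_powr:
  fixes z :: complex
  assumes "z \<notin> \<int>\<^sub>\<le>\<^sub>0" "z + 1/2 \<notin> \<int>\<^sub>\<le>\<^sub>0"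
  shows "Gamma z * Gamma (z + 1/2) = 2 powr (1 - 2*z) * of_real (sqrt pi) * Gamma (2*z)"
  using Gamma_legendre_duplication[OF assms] by (simp add: complex_two_powr)

lemma Gamma_double_complex:
  fixes z :: complex
  assumes "z \<notin> \<int>\<^sub>\<le>\<^sub>0" "z + 1/2 \<notin> \<int>\<^sub>\<le>\<^sub>0"
  shows "Gamma (2*z) = 2 powr (2*z - 1) * Gamma z * Gamma (z + 1/2) / of_real (sqrt pi)"
proof -
  have "2 powr (2*z - 1) * (Gamma z * Gamma (z + 1/2))
      = (2 powr (2*z - 1) * 2 powr (1 - 2*z)) * of_real (sqrt pi) * Gamma (2*z)"
    unfolding Gamma_legendre_duplication_powr[OF assms] by (simp only: mult_ac)
  also have "\<dots> = of_real (sqrt pi) * Gamma (2*z)"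
    by (simp flip: powr_add)
  finally show ?thesis
    by (simp add: field_simps)
qed

lemma Gamma_add_even_of_nat:
  fixes z :: complex
  assumes "2 * z \<notin> \<int>\<^sub>\<le>\<^sub>0"
  shows "Gamma (of_nat (2*n) + 2*z) = Gamma (2*z) * 4 ^ n * pochhammer z n * pochhammer (z + 1/2) n"
proof -
  have "(of_nat (2 ^ (2*n)) :: complex) = 4 ^ n"
    by (simp add: power_mult)
  then show ?thesis
    using pochhammer_Gamma[OF assms, of "2*n"] Gamma_nonzero[OF assms] pochhammer_double[of z n]
    by (simp add: field_simps add_ac)
qed

lemma Gamma_add_half_of_nat: "Gamma (of_nat n + 1/2 :: complex) = of_real (sqrt pi) * pochhammer (1/2) n"
proof -
  have "(1/2 :: complex) \<notin> \<int>\<^sub>\<le>\<^sub>0"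
    using of_real_in_nonpos_Ints_iff[of "1/2 :: real", where 'a=complex] by auto
  then show ?thesis
    using pochhammer_Gamma[of "1/2 :: complex" n] Gamma_one_half_complex by (simp add: add_ac)
qed

definition expansion_coeff :: "complex \<Rightarrow> nat \<Rightarrow> complex" where
  "expansion_coeff lam L = Gamma lam * (lam + 2 * of_nat L) * pochhammer lam L * pochhammer (lam + 1/2) L
     * pochhammer (1/2) L / fact L"

lemma powr_two_coeff_exponents:
  fixes lam :: complex
  shows "2 powr (of_nat (2*L) + 2*lam + 1) * (2 powr (- of_nat (4*L) - 2*lam))\<^sup>2 * 2 powr (2*lam - 1)
    = 1 / (4 ^ L * 16 ^ L)"
proof -
  have "(2 powr (- of_nat (4*L) - 2*lam))\<^sup>2 = (2 :: complex) powr (- 2 * of_nat (4*L) - 4*lam)"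
    by (simp add: power2_eq_square flip: powr_add)
  then have "2 powr (of_nat (2*L) + 2*lam + 1) * (2 powr (- of_nat (4*L) - 2*lam))\<^sup>2 * 2 powr (2*lam - 1)
      = (2 :: complex) powr (- of_nat (6 * L))"
    by (simp flip: powr_add)
  also have "\<dots> = 1 / (4 ^ L * 16 ^ L)"
    using powr_nat'[of 2 "6*L"] by (simp add: powr_minus power_mult divide_inverse flip: power_mult_distrib)
  finally show ?thesis .
qed

lemma Gamma_quotient_eq_expansion_coeff:
  fixes lam :: complex
  assumes lam: "2 * lam \<notin> \<int>\<^sub>\<le>\<^sub>0"
  shows "2 powr (of_nat (2*L) + 2*lam + 1)
           * (of_nat (2*L) + lam) * Gamma (of_nat L + 1/2) * Gamma (lam + 1/2)
           * (pochhammer (lam + 1/2) (2*L))\<^sup>2 * (Gamma (of_nat (2*L) + lam + 1))\<^sup>2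
           * Gamma (of_nat (2*L) + 2*lam)
           / (of_real pi * Gamma (of_nat L + 1) * (Gamma (of_nat (4*L) + 2*lam + 1))\<^sup>2)
         = expansion_coeff lam L / 16 ^ L"
proof -
  define z where "z = lam + of_nat (4*L + 1) / 2"
  have notin: "lam \<notin> \<int>\<^sub>\<le>\<^sub>0" "lam + 1/2 \<notin> \<int>\<^sub>\<le>\<^sub>0" "z \<notin> \<int>\<^sub>\<le>\<^sub>0" "z + 1/2 \<notin> \<int>\<^sub>\<le>\<^sub>0"
    "2 * lam + of_nat (4*L + 1) \<notin> \<int>\<^sub>\<le>\<^sub>0"
    using add_half_of_nat_notin_nonpos_Ints[OF lam, of 0] add_half_of_nat_notin_nonpos_Ints[OF lam, of 1]
      add_half_of_nat_notin_nonpos_Ints[OF lam, of "4*L + 1"] add_half_of_nat_notin_nonpos_Ints[OF lam, of "4*L + 2"]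
      add_of_nat_notin_nonpos_Ints[OF lam, of "4*L + 1"]
    unfolding z_def by (simp_all add: field_simps)
  have z_eqs: "z + 1/2 = of_nat (2*L) + lam + 1" "2 * z = of_nat (4*L) + 2*lam + 1" "1 - 2*z = - of_nat (4*L) - 2*lam"
    unfolding z_def by (simp_all add: field_simps)
  have poch_z: "pochhammer (lam + 1/2) (2*L) = Gamma z / Gamma (lam + 1/2)"
    using pochhammer_Gamma[OF notin(2), of "2*L"] unfolding z_def by (simp add: field_simps)
  have Gamma_z_half: "Gamma (of_nat (2*L) + lam + 1)
      = 2 powr (- of_nat (4*L) - 2*lam) * of_real (sqrt pi) * Gamma (of_nat (4*L) + 2*lam + 1) / Gamma z"
    using Gamma_legendre_duplication_powr[OF notin(3,4)] Gamma_nonzero[OF notin(3)]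
    unfolding z_eqs(3) unfolding z_eqs(1,2) by (simp add: field_simps)
  have nonzero: "Gamma z \<noteq> 0" "Gamma (lam + 1/2) \<noteq> 0" "Gamma (of_nat (4*L) + 2*lam + 1) \<noteq> 0"
    "of_real (sqrt pi) \<noteq> (0 :: complex)" "(2 :: complex) powr (- of_nat (4*L) - 2*lam) \<noteq> 0"
    "(2 :: complex) powr (2*lam - 1) \<noteq> 0"
    using Gamma_nonzero notin by (auto simp: add_ac)
  have powers: "2 powr (of_nat (2*L) + 2*lam + 1)
      = 1 / (4 ^ L * 16 ^ L) / ((2 powr (- of_nat (4*L) - 2*lam))\<^sup>2 * 2 powr (2*lam - 1))"
    using powr_two_coeff_exponents[of L lam] nonzero by (simp add: field_simps)
  have sqrt_pi: "of_real pi = (of_real (sqrt pi) * of_real (sqrt pi) :: complex)"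
    by (simp flip: of_real_mult)
  have "Gamma (of_nat L + 1 :: complex) = fact L"
    using Gamma_fact[of L] by (simp add: add.commute)
  then show ?thesis
    unfolding powers Gamma_add_half_of_nat poch_z Gamma_z_half Gamma_add_even_of_nat[OF lam]
      Gamma_double_complex[OF notin(1,2)] sqrt_pi expansion_coeff_def
    using nonzero by (simp add: field_simps power2_eq_square)
qed

lemma Gamma_coeff_eq_expansion_coeff:
  fixes lam :: complex
  assumes "2 * lam \<notin> \<int>\<^sub>\<le>\<^sub>0"
  shows "(-1) ^ (2*L) * k ^ (4*L) * 2 powr (of_nat (2*L) + 2*lam + 1)
           * (of_nat (2*L) + lam) * Gamma (of_nat L + 1/2) * Gamma (lam + 1/2)
           * (pochhammer (lam + 1/2) (2*L))\<^sup>2 * (Gamma (of_nat (2*L) + lam + 1))\<^sup>2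
           * Gamma (of_nat (2*L) + 2*lam)
           / (of_real pi * Gamma (of_nat L + 1) * (Gamma (of_nat (4*L) + 2*lam + 1))\<^sup>2)
         = expansion_coeff lam L * (- k\<^sup>2 / 4) ^ (2*L)"
proof -
  have "(-1) ^ (2*L) * k ^ (4*L) * 2 powr (of_nat (2*L) + 2*lam + 1)
           * (of_nat (2*L) + lam) * Gamma (of_nat L + 1/2) * Gamma (lam + 1/2)
           * (pochhammer (lam + 1/2) (2*L))\<^sup>2 * (Gamma (of_nat (2*L) + lam + 1))\<^sup>2
           * Gamma (of_nat (2*L) + 2*lam)
           / (of_real pi * Gamma (of_nat L + 1) * (Gamma (of_nat (4*L) + 2*lam + 1))\<^sup>2)
        = (-1) ^ (2*L) * k ^ (4*L) * (expansion_coeff lam L / 16 ^ L)"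
    unfolding Gamma_quotient_eq_expansion_coeff[OF assms, symmetric]
    by (simp only: mult.assoc times_divide_eq_right)
  also have "\<dots> = expansion_coeff lam L * (- k\<^sup>2 / 4) ^ (2*L)"
    by (simp add: power_mult power_divide flip: power_mult_distrib)
  finally show ?thesis .
qed

section \<open>Two finite convolution identities\<close>

lemma sum_rGamma_Vandermonde:
  fixes mu :: complex
  shows "(\<Sum>p\<le>n. rGamma (1 - mu + of_nat p) * rGamma (1 + mu + of_nat (n - p)) / (fact p * fact (n - p)))
     = 4 ^ n * pochhammer (1/2) n * rGamma (1 - mu + of_nat n) * rGamma (1 + mu + of_nat n) / fact n"
proof -
  have summand: "rGamma (1 - mu + of_nat p) * rGamma (1 + mu + of_nat (n - p)) / (fact p * fact (n - p))
     = rGamma (1 - mu + of_nat n) * rGamma (1 + mu + of_nat n) * (((of_nat n + mu) gchoose p) * ((of_nat n - mu) gchoose (n - p)))"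
    if "p \<le> n" for p
  proof -
    have "rGamma (1 - mu + of_nat p) = pochhammer (1 - mu + of_nat p) (n - p) * rGamma (1 - mu + of_nat n)"
      using pochhammer_rGamma[of "1 - mu + of_nat p" "n - p"] that by (simp add: of_nat_diff algebra_simps)
    moreover have "rGamma (1 + mu + of_nat (n - p)) = pochhammer (1 + mu + of_nat (n - p)) p * rGamma (1 + mu + of_nat n)"
      using pochhammer_rGamma[of "1 + mu + of_nat (n - p)" p] that by (simp add: of_nat_diff algebra_simps)
    moreover have "(of_nat n - mu) gchoose (n - p) = pochhammer (1 - mu + of_nat p) (n - p) / fact (n - p)"
      unfolding gbinomial_pochhammer' using that by (simp add: of_nat_diff algebra_simps)
    moreover have "(of_nat n + mu) gchoose p = pochhammer (1 + mu + of_nat (n - p)) p / fact p"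
      unfolding gbinomial_pochhammer' using that by (simp add: of_nat_diff algebra_simps)
    ultimately show ?thesis
      by (simp add: field_simps)
  qed
  have "(\<Sum>p\<le>n. rGamma (1 - mu + of_nat p) * rGamma (1 + mu + of_nat (n - p)) / (fact p * fact (n - p)))
      = rGamma (1 - mu + of_nat n) * rGamma (1 + mu + of_nat n)
        * (\<Sum>p\<le>n. ((of_nat n + mu) gchoose p) * ((of_nat n - mu) gchoose (n - p)))"
    unfolding sum_distrib_left by (rule sum.cong) (simp_all only: summand atMost_iff)
  also have "(\<Sum>p\<le>n. ((of_nat n + mu) gchoose p) * ((of_nat n - mu) gchoose (n - p))) = of_nat (2 * n) gchoose n"
    using gbinomial_Vandermonde[of "of_nat n + mu" "of_nat n - mu" n] by (simp add: atLeast0AtMost)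
  also have "\<dots> = of_nat ((2 * n) choose n)"
    by (simp add: binomial_gbinomial)
  also have "\<dots> = fact (2 * n) / (fact n * fact n)"
    by (simp add: binomial_fact)
  also have "\<dots> = 4 ^ n * pochhammer (1/2) n / fact n"
    by (simp add: fact_double power_mult)
  finally show ?thesis
    by (simp add: field_simps)
qed

lemma expansion_coeff_summand_eq_dougall_term:
  fixes lam :: complex
  assumes lam: "lam \<notin> \<int>\<^sub>\<le>\<^sub>0" and "L \<le> p" "L \<le> q"
  shows "expansion_coeff lam L
            * (pochhammer (of_nat L + 1/2) (p - L) * pochhammer (of_nat L + 1/2) (q - L))
            * (rGamma (lam + 1 + of_nat (L + p)) * rGamma (lam + 1 + of_nat (L + q)))
            / (fact (p - L) * fact (q - L))
       = rGamma lam * pochhammer (1/2) p * pochhammer (1/2) q / (fact p * fact q) * dougall_term lam p q L"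
proof -
  have rGamma_shift: "rGamma (lam + 1 + of_nat (L + n)) = rGamma lam / pochhammer lam (L + n + 1)" for n
    using pochhammer_rGamma[of lam "L + n + 1"] pochhammer_nonzero[OF lam, of "L + n + 1"]
    by (simp add: field_simps add_ac)
  have shifted_half: "pochhammer (of_nat L + 1/2) (n - L) = pochhammer (1/2) n / pochhammer (1/2 :: complex) L"
    if "L \<le> n" for n
    using pochhammer_product[OF that, of "1/2 :: complex"] pochhammer_half_nonzero[of L, where 'a=complex]
    by (simp add: field_simps add_ac)
  have Gamma: "Gamma lam = 1 / rGamma lam"
    by (simp add: rGamma_inverse_Gamma flip: inverse_eq_divide)
  show ?thesis
    using assms pochhammer_half_nonzero[where 'a=complex] pochhammer_nonzero[OF lam] rGamma_nonzero[OF lam]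
    unfolding expansion_coeff_def dougall_term_def dougall_coeff_def rGamma_shift Gamma
      fact_diff_mult_fact_diff[OF assms(2,3)] shifted_half[OF assms(2)] shifted_half[OF assms(3)]
    by (simp add: field_simps pochhammer_of_nat_eq_0_iff)
qed

theorem sum_expansion_coeff_pochhammer_rGamma:
  fixes lam :: complex
  assumes lam: "lam \<notin> \<int>\<^sub>\<le>\<^sub>0"
  shows "(\<Sum>L\<le>min p q. expansion_coeff lam L
            * (pochhammer (of_nat L + 1/2) (p - L) * pochhammer (of_nat L + 1/2) (q - L))
            * (rGamma (lam + 1 + of_nat (L + p)) * rGamma (lam + 1 + of_nat (L + q)))
            / (fact (p - L) * fact (q - L)))
     = pochhammer (1/2) (p + q) * rGamma (lam + 1 + of_nat (p + q)) / (fact p * fact q)"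
proof -
  define c where "c = rGamma lam * pochhammer (1/2) p * pochhammer (1/2) q / (fact p * fact q)"
  have "(\<Sum>L\<le>min p q. expansion_coeff lam L
            * (pochhammer (of_nat L + 1/2) (p - L) * pochhammer (of_nat L + 1/2) (q - L))
            * (rGamma (lam + 1 + of_nat (L + p)) * rGamma (lam + 1 + of_nat (L + q)))
            / (fact (p - L) * fact (q - L)))
      = c * (\<Sum>L\<le>min p q. dougall_term lam p q L)"
    unfolding sum_distrib_left
  proof (rule sum.cong)
    fix L
    assume "L \<in> {..min p q}"
    then show "expansion_coeff lam L
            * (pochhammer (of_nat L + 1/2) (p - L) * pochhammer (of_nat L + 1/2) (q - L))
            * (rGamma (lam + 1 + of_nat (L + p)) * rGamma (lam + 1 + of_nat (L + q)))
            / (fact (p - L) * fact (q - L)) = c * dougall_term lam p q L"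
      using expansion_coeff_summand_eq_dougall_term[OF lam, of L p q, folded c_def] by simp
  qed simp
  also have "(\<Sum>L\<le>min p q. dougall_term lam p q L) = (\<Sum>L\<le>q. dougall_term lam p q L)"
    by (rule sum.mono_neutral_left) (auto simp: dougall_term_def dougall_coeff_eq_0)
  also have "c * \<dots> = pochhammer (1/2) (p + q) * rGamma (lam + 1 + of_nat (p + q)) / (fact p * fact q)"
    using pochhammer_rGamma[of lam "p + q + 1"] pochhammer_half_nonzero[where 'a=complex] pochhammer_nonzero[OF lam]
    unfolding sum_dougall_term[OF lam] c_def by (simp add: field_simps add_ac)
  finally show ?thesis .
qed

section \<open>Growth bounds\<close>

lemma norm_rGamma_Suc_le:
  fixes b :: complex
  assumes "2 * norm b + 1 \<le> real m"
  shows "norm (rGamma (b + of_nat (Suc m))) \<le> 2 / (real m + 1) * norm (rGamma (b + of_nat m))"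
proof -
  have "real m \<le> norm (b + of_nat m) + norm b"
    using norm_triangle_ineq4[of "b + of_nat m" b] by simp
  with assms have large: "(real m + 1) / 2 \<le> norm (b + of_nat m)"
    by argo
  have "rGamma (b + of_nat m) = (b + of_nat m) * rGamma (b + of_nat (Suc m))"
    using rGamma_plus1[of "b + of_nat m"] by (simp add: add_ac)
  then have "(real m + 1) / 2 * norm (rGamma (b + of_nat (Suc m))) \<le> norm (rGamma (b + of_nat m))"
    using mult_right_mono[OF large norm_ge_zero] by (simp add: norm_mult)
  then show ?thesis
    by (simp add: field_simps)
qed

lemma rGamma_add_of_nat_bound:
  fixes b :: complex
  obtains C where "C \<ge> 0" "\<And>n. norm (rGamma (b + of_nat n)) \<le> C * 2 ^ n / fact n"
proof -
  define N where "N = nat \<lceil>2 * norm b\<rceil> + 1"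
  define C where "C = Max ((\<lambda>n. norm (rGamma (b + of_nat n)) * fact n / 2 ^ n) ` {..N})"
  have small: "norm (rGamma (b + of_nat n)) \<le> C * 2 ^ n / fact n" if "n \<le> N" for n
  proof -
    have "norm (rGamma (b + of_nat n)) * fact n / 2 ^ n \<le> C"
      unfolding C_def by (rule Max_ge) (use that in auto)
    then show ?thesis by (simp add: field_simps)
  qed
  have "C \<ge> 0"
    using order_trans[OF norm_ge_zero small[of 0]] by simp
  moreover have "norm (rGamma (b + of_nat n)) \<le> C * 2 ^ n / fact n" for n
  proof (induction n)
    case (Suc m)
    show ?case
    proof (cases "Suc m \<le> N")
      case False
      then have "2 * norm b + 1 \<le> real m"
        unfolding N_def by linarith
      then have "norm (rGamma (b + of_nat (Suc m))) \<le> 2 / (real m + 1) * norm (rGamma (b + of_nat m))"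
        by (rule norm_rGamma_Suc_le)
      also have "\<dots> \<le> 2 / (real m + 1) * (C * 2 ^ m / fact m)"
        using Suc.IH by (rule mult_left_mono) simp
      also have "\<dots> = C * 2 ^ Suc m / fact (Suc m)"
        by (simp add: field_simps)
      finally show ?thesis .
    qed (use small in blast)
  qed (use small[of 0] in simp)
  ultimately show ?thesis
    using that by blast
qed

lemma norm_pochhammer_le: "norm (pochhammer z n) \<le> (norm z + 1) ^ n * fact n"
  for z :: "'a :: real_normed_field"
proof (induction n)
  case (Suc n)
  have "norm (z + of_nat n) \<le> norm z + real n"
    using norm_triangle_ineq[of z "of_nat n"] by simp
  also have "\<dots> \<le> (norm z + 1) * (real n + 1)"
    by (simp add: algebra_simps)
  finally have "norm (z + of_nat n) \<le> (norm z + 1) * (real n + 1)" .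
  then have "norm (pochhammer z n) * norm (z + of_nat n) \<le> ((norm z + 1) ^ n * fact n) * ((norm z + 1) * (real n + 1))"
    by (intro mult_mono Suc.IH) auto
  also have "\<dots> = (norm z + 1) ^ Suc n * fact (Suc n)"
    by (simp add: algebra_simps)
  finally show ?case
    by (simp add: pochhammer_Suc norm_mult)
qed simp

lemma norm_pochhammer_add_half_le: "norm (pochhammer (of_nat L + 1/2 :: complex) i) \<le> fact (L + i) / fact L"
proof (induction i)
  case (Suc i)
  have "(of_nat L + 1/2 + of_nat i :: complex) = of_real (real L + 1/2 + real i)"
    by simp
  then have "norm (of_nat L + 1/2 + of_nat i :: complex) \<le> real (L + i) + 1"
    by (simp only: norm_of_real)
  then have "norm (pochhammer (of_nat L + 1/2 :: complex) i) * norm (of_nat L + 1/2 + of_nat i :: complex)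
      \<le> fact (L + i) / fact L * (real (L + i) + 1)"
    by (intro mult_mono Suc.IH) auto
  also have "\<dots> = fact (L + Suc i) / fact L"
    by (simp add: algebra_simps)
  finally show ?case
    by (simp add: pochhammer_Suc norm_mult)
qed simp

definition hyperpFq_term :: "complex list \<Rightarrow> complex list \<Rightarrow> complex \<Rightarrow> nat \<Rightarrow> complex" where
  "hyperpFq_term as bs z n = (\<Prod>a\<leftarrow>as. pochhammer a n) * (\<Prod>b\<leftarrow>bs. rGamma (b + of_nat n)) * z ^ n / fact n"

lemma hyperpFq_reg_eq_suminf: "hyperpFq_reg as bs z = suminf (hyperpFq_term as bs z)"
  by (simp add: hyperpFq_reg_def hyperpFq_term_def[abs_def])

definition shifted_1F2_term :: "complex \<Rightarrow> complex \<Rightarrow> complex \<Rightarrow> nat \<Rightarrow> nat \<Rightarrow> complex" where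
  "shifted_1F2_term lam nu u L = hyperpFq_term [of_nat L + 1/2] [of_nat (2*L) + lam + 1, of_nat L + nu + 1] u"

lemma norm_shifted_1F2_term_le:
  fixes lam nu u :: complex
  obtains M where "M \<ge> 0"
    "\<And>L i. norm (shifted_1F2_term lam nu u L i) \<le> M * 8 ^ L * (4 * norm u) ^ i / (fact L * fact L * fact i)"
proof -
  obtain C1 where C1: "C1 \<ge> 0" "\<And>n. norm (rGamma (lam + 1 + of_nat n)) \<le> C1 * 2 ^ n / fact n"
    using rGamma_add_of_nat_bound[of "lam + 1"] by blast
  obtain C2 where C2: "C2 \<ge> 0" "\<And>n. norm (rGamma (nu + 1 + of_nat n)) \<le> C2 * 2 ^ n / fact n"
    using rGamma_add_of_nat_bound[of "nu + 1"] by blast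
  have "norm (shifted_1F2_term lam nu u L i) \<le> (C1 * C2) * 8 ^ L * (4 * norm u) ^ i / (fact L * fact L * fact i)"
    for L i
  proof -
    have "norm (shifted_1F2_term lam nu u L i)
       = norm (pochhammer (of_nat L + 1/2 :: complex) i) * (norm (rGamma (lam + 1 + of_nat (2*L + i)))
          * norm (rGamma (nu + 1 + of_nat (L + i)))) * (norm u ^ i / fact i)"
      by (simp add: shifted_1F2_term_def hyperpFq_term_def norm_mult norm_divide norm_power add_ac)
    also have "\<dots> \<le> (fact (L + i) / fact L) * ((C1 * 2 ^ (2*L + i) / fact (2*L + i)) * (C2 * 2 ^ (L + i) / fact (L + i)))
          * (norm u ^ i / fact i)"
      by (intro mult_mono norm_pochhammer_add_half_le C1 C2 mult_nonneg_nonneg) (auto simp: C1 C2)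
    also have "\<dots> = (C1 * C2) * 8 ^ L * (4 * norm u) ^ i / (fact L * fact (2*L + i) * fact i)"
    proof -
      have "(2 :: real) ^ (2*L + i) * 2 ^ (L + i) = 2 ^ (3*L + 2*i)"
        by (simp flip: power_add)
      also have "\<dots> = 8 ^ L * 4 ^ i"
        by (simp add: power_add power_mult)
      finally have "(2 :: real) ^ (2*L + i) * 2 ^ (L + i) = 8 ^ L * 4 ^ i" .
      then show ?thesis
        by (simp add: field_simps power_mult_distrib)
    qed
    also have "\<dots> \<le> (C1 * C2) * 8 ^ L * (4 * norm u) ^ i / (fact L * fact L * fact i)"
      using C1 C2 by (intro divide_left_mono mult_right_mono mult_left_mono fact_mono) auto
    finally show ?thesis .
  qed
  with that C1 C2 show ?thesis
    by (metis mult_nonneg_nonneg)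
qed

lemma norm_expansion_coeff_le:
  fixes lam :: complex
  obtains K E where "K \<ge> 0" "E \<ge> 0" "\<And>L. norm (expansion_coeff lam L) \<le> K * E ^ L * (fact L * fact L)"
proof -
  define K where "K = norm (Gamma lam) * (norm lam + 2)"
  define E where "E = 2 * (norm lam + 1) * (norm (lam + 1/2) + 1) * (norm (1/2 :: complex) + 1)"
  have "norm (expansion_coeff lam L) \<le> K * E ^ L * (fact L * fact L)" for L
  proof -
    have "norm (lam + 2 * of_nat L) \<le> norm lam + 2 * real L"
      using norm_triangle_ineq[of lam "2 * of_nat L"] by simp
    also have "\<dots> \<le> (norm lam + 2) * (real L + 1)"
      by (simp add: algebra_simps)
    also have "\<dots> \<le> (norm lam + 2) * 2 ^ L"
    proof -
      have "real (Suc L) \<le> real (2 ^ L)"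
        using less_exp[of L] by (simp only: of_nat_le_iff Suc_le_eq)
      then show ?thesis
        by (intro mult_left_mono) simp_all
    qed
    finally have lin: "norm (lam + 2 * of_nat L) \<le> (norm lam + 2) * 2 ^ L" .
    have "norm (expansion_coeff lam L) = norm (Gamma lam) * norm (lam + 2 * of_nat L) * norm (pochhammer lam L)
         * norm (pochhammer (lam + 1/2) L) * norm (pochhammer (1/2 :: complex) L) / fact L"
      by (simp add: expansion_coeff_def norm_mult norm_divide)
    also have "\<dots> \<le> norm (Gamma lam) * ((norm lam + 2) * 2 ^ L) * ((norm lam + 1) ^ L * fact L)
         * ((norm (lam + 1/2) + 1) ^ L * fact L) * ((norm (1/2 :: complex) + 1) ^ L * fact L) / fact L"
      by (intro divide_right_mono mult_mono lin norm_pochhammer_le mult_nonneg_nonneg) auto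
    also have "\<dots> = K * E ^ L * (fact L * fact L)"
      unfolding K_def E_def power_mult_distrib by (simp add: field_simps)
    finally show ?thesis .
  qed
  moreover have "K \<ge> 0" "E \<ge> 0"
    unfolding K_def E_def by auto
  ultimately show ?thesis
    using that by blast
qed

section \<open>Rearranging absolutely summable families\<close>

lemma has_sum_product:
  fixes f g :: "_ \<Rightarrow> 'a :: {real_normed_div_algebra, banach}"
  assumes f: "(f has_sum F) A" and g: "(g has_sum G) B"
    and f_abs: "(\<lambda>x. norm (f x)) summable_on A" and g_abs: "(\<lambda>y. norm (g y)) summable_on B"
  shows "((\<lambda>(x, y). f x * g y) has_sum F * G) (A \<times> B)"
proof -
  have "(\<lambda>(x, y). norm (f x) * norm (g y)) summable_on A \<times> B"
  proof (rule summable_on_SigmaI)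
    show "((\<lambda>y. case (x, y) of (x, y) \<Rightarrow> norm (f x) * norm (g y)) has_sum norm (f x) * infsum (\<lambda>y. norm (g y)) B) B"
      for x using has_sum_cmult_right[OF has_sum_infsum[OF g_abs]] by simp
    show "(\<lambda>x. norm (f x) * infsum (\<lambda>y. norm (g y)) B) summable_on A"
      using f_abs by (rule summable_on_cmult_left)
  qed auto
  then have "(\<lambda>z. norm ((\<lambda>(x, y). f x * g y) z)) summable_on A \<times> B"
    by (simp add: case_prod_unfold norm_mult)
  then have "(\<lambda>(x, y). f x * g y) summable_on Sigma A (\<lambda>_. B)"
    by (simp add: abs_summable_summable)
  moreover have "((\<lambda>y. f x * g y) has_sum f x * G) B" for x
    using has_sum_cmult_right[OF g] .
  ultimately show ?thesis
    using has_sum_SigmaI[where f = "\<lambda>(x, y). f x * g y" and g = "\<lambda>x. f x * G" and B = "\<lambda>_. B"]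
      has_sum_cmult_left[OF f] by simp
qed

lemma has_sum_diagonal:
  fixes f :: "nat \<times> nat \<Rightarrow> 'a :: {comm_monoid_add, uniform_space, uniform_topological_group_add}"
  assumes "(f has_sum S) UNIV"
  shows "((\<lambda>n. \<Sum>p\<le>n. f (p, n - p)) has_sum S) UNIV"
proof -
  have "((\<lambda>(n, p). f (p, n - p)) has_sum S) (SIGMA n:UNIV. {..n})"
    using assms
    by (subst has_sum_reindex_bij_witness[where j = "\<lambda>(n, p). (p, n - p)" and i = "\<lambda>(p, q). (p + q, p)"
          and T = UNIV and h = f]) auto
  then show ?thesis
    by (rule has_sum_Sigma') auto
qed

lemma has_sum_regroup_min:
  fixes f :: "nat \<times> nat \<times> nat \<Rightarrow> 'a :: {comm_monoid_add, uniform_space, uniform_topological_group_add}"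
  assumes "(f has_sum S) UNIV"
  shows "((\<lambda>(p, q). \<Sum>L\<le>min p q. f (L, p - L, q - L)) has_sum S) UNIV"
proof -
  have "((\<lambda>((p, q), L). f (L, p - L, q - L)) has_sum S) (SIGMA pq:UNIV. {..min (fst pq) (snd pq)})"
    using assms
    by (subst has_sum_reindex_bij_witness[where j = "\<lambda>((p, q), L). (L, p - L, q - L)"
          and i = "\<lambda>(L, i, j). ((L + i, L + j), L)" and T = UNIV and h = f]) auto
  then show ?thesis
    by (rule has_sum_Sigma') (auto simp: case_prod_unfold)
qed

lemma has_sum_exp_series: "((\<lambda>n. x ^ n / fact n) has_sum exp x) UNIV"
  for x :: real
proof -
  have "(\<lambda>n. x ^ n / fact n) sums exp x"
    using exp_converges[of x] by (simp add: divide_inverse_commute)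
  moreover have "summable (\<lambda>n. norm (x ^ n / fact n))"
    using summable_exp[of "norm x"] by (simp add: norm_divide norm_power divide_inverse_commute abs_mult power_abs)
  ultimately show ?thesis
    by (simp add: norm_summable_imp_has_sum)
qed

lemma has_sum_exp_series_triple:
  fixes x y :: real
  shows "((\<lambda>(L, i, j). x ^ L / fact L * (y ^ i / fact i * (y ^ j / fact j))) has_sum exp x * (exp y * exp y)) UNIV"
proof -
  have abs_summable: "(\<lambda>n. norm (f n)) summable_on A" if "(f has_sum s) A" for f :: "'a \<Rightarrow> real" and s A
    using that summable_on_iff_abs_summable_on_real has_sum_imp_summable by blast
  have pair: "((\<lambda>(i, j). y ^ i / fact i * (y ^ j / fact j)) has_sum exp y * exp y) UNIV"
    using has_sum_product[OF has_sum_exp_series has_sum_exp_series] abs_summable[OF has_sum_exp_series]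
    by simp
  show ?thesis
    using has_sum_product[OF has_sum_exp_series pair abs_summable[OF has_sum_exp_series] abs_summable[OF pair]]
    by (simp add: case_prod_unfold)
qed

section \<open>The triple series\<close>

definition expansion_triple_term :: "complex \<Rightarrow> complex \<Rightarrow> complex \<Rightarrow> nat \<times> nat \<times> nat \<Rightarrow> complex" where
  "expansion_triple_term lam mu u = (\<lambda>(L, i, j). expansion_coeff lam L * u ^ (2*L)
     * (shifted_1F2_term lam (- mu) u L i * shifted_1F2_term lam mu u L j))"

lemma norm_expansion_triple_term_le:
  fixes lam mu u :: complex
  obtains C Q R where "C \<ge> 0"
    "\<And>L i j. norm (expansion_triple_term lam mu u (L, i, j)) \<le> C * (Q ^ L / fact L * (R ^ i / fact i * (R ^ j / fact j)))"
proof -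
  obtain M1 where M1: "M1 \<ge> 0"
    "\<And>L i. norm (shifted_1F2_term lam (- mu) u L i) \<le> M1 * 8 ^ L * (4 * norm u) ^ i / (fact L * fact L * fact i)"
    using norm_shifted_1F2_term_le by blast
  obtain M2 where M2: "M2 \<ge> 0"
    "\<And>L i. norm (shifted_1F2_term lam mu u L i) \<le> M2 * 8 ^ L * (4 * norm u) ^ i / (fact L * fact L * fact i)"
    using norm_shifted_1F2_term_le by blast
  obtain K E where KE: "K \<ge> 0" "E \<ge> 0" "\<And>L. norm (expansion_coeff lam L) \<le> K * E ^ L * (fact L * fact L)"
    using norm_expansion_coeff_le by blast
  define Q where "Q = 64 * E * norm u ^ 2"
  define R where "R = 4 * norm u"
  have "norm (expansion_triple_term lam mu u (L, i, j))
      \<le> K * M1 * M2 * (Q ^ L / fact L * (R ^ i / fact i * (R ^ j / fact j)))" for L i j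
  proof -
    have "norm (expansion_triple_term lam mu u (L, i, j))
        = norm (expansion_coeff lam L) * (norm u ^ 2) ^ L
          * (norm (shifted_1F2_term lam (- mu) u L i) * norm (shifted_1F2_term lam mu u L j))"
      by (simp add: expansion_triple_term_def norm_mult norm_power power_mult)
    also have "\<dots> \<le> (K * E ^ L * (fact L * fact L)) * (norm u ^ 2) ^ L
        * ((M1 * 8 ^ L * R ^ i / (fact L * fact L * fact i)) * (M2 * 8 ^ L * R ^ j / (fact L * fact L * fact j)))"
      unfolding R_def using KE M1 M2 by (intro mult_mono mult_nonneg_nonneg) auto
    also have "\<dots> = K * M1 * M2 * (Q ^ L / (fact L * fact L) * (R ^ i / fact i * (R ^ j / fact j)))"
    proof -
      have "(64 :: real) ^ L = 8 ^ L * 8 ^ L"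
        by (simp flip: power_mult_distrib)
      then have "Q ^ L = E ^ L * (norm u ^ 2) ^ L * 8 ^ L * 8 ^ L"
        unfolding Q_def by (simp add: power_mult_distrib)
      then show ?thesis
        by (simp add: field_simps)
    qed
    also have "\<dots> \<le> K * M1 * M2 * (Q ^ L / fact L * (R ^ i / fact i * (R ^ j / fact j)))"
      using KE M1 M2 by (auto intro!: mult_left_mono mult_right_mono divide_left_mono simp: Q_def R_def)
    finally show ?thesis .
  qed
  with KE M1 M2 that show ?thesis
    by (metis mult_nonneg_nonneg)
qed

lemma expansion_triple_term_abs_summable: "(\<lambda>x. norm (expansion_triple_term lam mu u x)) summable_on UNIV"
proof -
  obtain C Q R where C: "C \<ge> 0"
    "\<And>L i j. norm (expansion_triple_term lam mu u (L, i, j)) \<le> C * (Q ^ L / fact L * (R ^ i / fact i * (R ^ j / fact j)))"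
    using norm_expansion_triple_term_le by blast
  define g where "g = (\<lambda>(L, i, j). C * (Q ^ L / fact L * (R ^ i / fact i * (R ^ j / fact j))))"
  have "g summable_on UNIV"
    using has_sum_cmult_right[OF has_sum_exp_series_triple[of Q R], of C]
    unfolding g_def by (auto simp: summable_on_def case_prod_unfold)
  moreover have "norm (expansion_triple_term lam mu u z) \<le> g z" for z
    using C(2) by (cases z) (auto simp: g_def)
  ultimately show ?thesis
    by (rule Infinite_Sum.abs_summable_on_comparison_test')
qed

lemma shifted_1F2_term_abs_summable: "(\<lambda>i. norm (shifted_1F2_term lam nu u L i)) summable_on UNIV"
proof -
  obtain M where M: "M \<ge> 0"
    "\<And>L i. norm (shifted_1F2_term lam nu u L i) \<le> M * 8 ^ L * (4 * norm u) ^ i / (fact L * fact L * fact i)"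
    using norm_shifted_1F2_term_le by blast
  have "((\<lambda>i. M * 8 ^ L / (fact L * fact L) * ((4 * norm u) ^ i / fact i))
      has_sum M * 8 ^ L / (fact L * fact L) * exp (4 * norm u)) UNIV"
    by (rule has_sum_cmult_right[OF has_sum_exp_series])
  then show ?thesis
    using M(2) by (intro Infinite_Sum.abs_summable_on_comparison_test') (auto simp: summable_on_def)
qed

lemma shifted_1F2_term_has_sum:
  "(shifted_1F2_term lam nu u L has_sum hyperpFq_reg [of_nat L + 1/2] [of_nat (2*L) + lam + 1, of_nat L + nu + 1] u) UNIV"
proof -
  have "summable (\<lambda>i. norm (shifted_1F2_term lam nu u L i))"
    using shifted_1F2_term_abs_summable[of lam nu u L] by (subst (asm) summable_on_UNIV_nonneg_real_iff) auto
  then show ?thesis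
    unfolding hyperpFq_reg_eq_suminf shifted_1F2_term_def
    by (intro norm_summable_imp_has_sum summable_sums) (auto intro: summable_norm_cancel)
qed

lemma sum_expansion_triple_term_min:
  assumes lam: "lam \<notin> \<int>\<^sub>\<le>\<^sub>0"
  shows "(\<Sum>L\<le>min p q. expansion_triple_term lam mu u (L, p - L, q - L))
    = u ^ (p + q) * (rGamma (1 - mu + of_nat p) * rGamma (1 + mu + of_nat q))
      * (pochhammer (1/2) (p + q) * rGamma (lam + 1 + of_nat (p + q)) / (fact p * fact q))"
proof -
  have summand: "expansion_triple_term lam mu u (L, p - L, q - L)
    = u ^ (p + q) * (rGamma (1 - mu + of_nat p) * rGamma (1 + mu + of_nat q))
      * (expansion_coeff lam L * (pochhammer (of_nat L + 1/2) (p - L) * pochhammer (of_nat L + 1/2) (q - L))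
         * (rGamma (lam + 1 + of_nat (L + p)) * rGamma (lam + 1 + of_nat (L + q))) / (fact (p - L) * fact (q - L)))"
    if "L \<le> min p q" for L
  proof -
    from that obtain i j where "p = L + i" "q = L + j"
      by (metis le_Suc_ex min.bounded_iff)
    then show ?thesis
      by (simp add: expansion_triple_term_def shifted_1F2_term_def hyperpFq_term_def field_simps mult_2 power_add power_mult power2_eq_square)
  qed
  show ?thesis
    unfolding sum_expansion_coeff_pochhammer_rGamma[OF lam, symmetric] sum_distrib_left
    by (rule sum.cong) (simp_all only: summand atMost_iff)
qed

lemma sum_diagonal_eq_hyperpFq_term:
  "(\<Sum>p\<le>n. u ^ (p + (n - p)) * (rGamma (1 - mu + of_nat p) * rGamma (1 + mu + of_nat (n - p)))
      * (pochhammer (1/2) (p + (n - p)) * rGamma (lam + 1 + of_nat (p + (n - p))) / (fact p * fact (n - p))))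
   = hyperpFq_term [1/2, 1/2] [lam + 1, 1 - mu, mu + 1] (4 * u) n"
proof -
  have "(\<Sum>p\<le>n. u ^ (p + (n - p)) * (rGamma (1 - mu + of_nat p) * rGamma (1 + mu + of_nat (n - p)))
      * (pochhammer (1/2) (p + (n - p)) * rGamma (lam + 1 + of_nat (p + (n - p))) / (fact p * fact (n - p))))
    = u ^ n * pochhammer (1/2) n * rGamma (lam + 1 + of_nat n)
      * (\<Sum>p\<le>n. rGamma (1 - mu + of_nat p) * rGamma (1 + mu + of_nat (n - p)) / (fact p * fact (n - p)))"
    unfolding sum_distrib_left by (rule sum.cong) auto
  also have "\<dots> = hyperpFq_term [1/2, 1/2] [lam + 1, 1 - mu, mu + 1] (4 * u) n"
    unfolding sum_rGamma_Vandermonde by (simp add: hyperpFq_term_def power_mult_distrib field_simps)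
  finally show ?thesis .
qed

lemma has_sum_expansion_triple_term_inner:
  "((\<lambda>ij. expansion_triple_term lam mu u (L, ij)) has_sum expansion_coeff lam L * u ^ (2*L)
      * (hyperpFq_reg [of_nat L + 1/2] [of_nat (2*L) + lam + 1, of_nat L - mu + 1] u
         * hyperpFq_reg [of_nat L + 1/2] [of_nat (2*L) + lam + 1, of_nat L + mu + 1] u)) UNIV"
proof -
  have "((\<lambda>(i, j). shifted_1F2_term lam (- mu) u L i * shifted_1F2_term lam mu u L j)
      has_sum hyperpFq_reg [of_nat L + 1/2] [of_nat (2*L) + lam + 1, of_nat L - mu + 1] u
            * hyperpFq_reg [of_nat L + 1/2] [of_nat (2*L) + lam + 1, of_nat L + mu + 1] u) UNIV"
    using has_sum_product[OF shifted_1F2_term_has_sum[of lam "- mu" u L] shifted_1F2_term_has_sum[of lam mu u L]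
        shifted_1F2_term_abs_summable shifted_1F2_term_abs_summable]
    by simp
  from has_sum_cmult_right[OF this, of "expansion_coeff lam L * u ^ (2*L)"] show ?thesis
    by (simp add: expansion_triple_term_def case_prod_unfold mult.assoc)
qed

lemma has_sum_expansion_triple_term_regroup:
  assumes lam: "lam \<notin> \<int>\<^sub>\<le>\<^sub>0" and T: "(expansion_triple_term lam mu u has_sum T) UNIV"
  shows "(hyperpFq_term [1/2, 1/2] [lam + 1, 1 - mu, mu + 1] (4 * u) has_sum T) UNIV"
proof -
  define B where "B = (\<lambda>(p, q). u ^ (p + q) * (rGamma (1 - mu + of_nat p) * rGamma (1 + mu + of_nat q))
      * (pochhammer (1/2) (p + q) * rGamma (lam + 1 + of_nat (p + q)) / (fact p * fact q)))"
  have "(\<lambda>(p, q). \<Sum>L\<le>min p q. expansion_triple_term lam mu u (L, p - L, q - L)) = B"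
    by (auto simp: B_def sum_expansion_triple_term_min[OF lam])
  then have "(B has_sum T) UNIV"
    using has_sum_regroup_min[OF T] by simp
  then have "((\<lambda>n. \<Sum>p\<le>n. B (p, n - p)) has_sum T) UNIV"
    by (rule has_sum_diagonal)
  then show ?thesis
    by (simp only: B_def case_prod_conv sum_diagonal_eq_hyperpFq_term)
qed

theorem has_sum_product_expansion:
  fixes lam mu u :: complex
  assumes lam: "lam \<notin> \<int>\<^sub>\<le>\<^sub>0"
  shows "((\<lambda>L. expansion_coeff lam L * u ^ (2*L)
            * (hyperpFq_reg [of_nat L + 1/2] [of_nat (2*L) + lam + 1, of_nat L - mu + 1] u
               * hyperpFq_reg [of_nat L + 1/2] [of_nat (2*L) + lam + 1, of_nat L + mu + 1] u))
         has_sum hyperpFq_reg [1/2, 1/2] [lam + 1, 1 - mu, mu + 1] (4 * u)) UNIV"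
proof -
  obtain T where T: "(expansion_triple_term lam mu u has_sum T) UNIV"
    using expansion_triple_term_abs_summable abs_summable_summable by (blast intro: has_sum_infsum)
  then have "(expansion_triple_term lam mu u has_sum T) (UNIV \<times> UNIV)"
    by simp
  then have "((\<lambda>L. expansion_coeff lam L * u ^ (2*L)
            * (hyperpFq_reg [of_nat L + 1/2] [of_nat (2*L) + lam + 1, of_nat L - mu + 1] u
               * hyperpFq_reg [of_nat L + 1/2] [of_nat (2*L) + lam + 1, of_nat L + mu + 1] u)) has_sum T) UNIV"
    by (rule has_sum_Sigma') (rule has_sum_expansion_triple_term_inner)
  moreover have "T = hyperpFq_reg [1/2, 1/2] [lam + 1, 1 - mu, mu + 1] (4 * u)"
    using has_sum_expansion_triple_term_regroup[OF lam T]
    unfolding hyperpFq_reg_eq_suminf by (metis has_sum_imp_sums sums_unique)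
  ultimately show ?thesis
    by simp
qed

theorem mainTheorem5:
  fixes k mu lam :: complex
  assumes "lam \<noteq> 0"
    and "2 * lam \<notin> \<int>\<^sub>\<le>\<^sub>0"
  shows "(\<lambda>L. (-1) ^ (2*L) * k ^ (4*L) * 2 powr (of_nat (2*L) + 2*lam + 1)
           * (of_nat (2*L) + lam) * Gamma (of_nat L + 1/2) * Gamma (lam + 1/2)
           * (pochhammer (lam + 1/2) (2*L))\<^sup>2 * (Gamma (of_nat (2*L) + lam + 1))\<^sup>2
           * Gamma (of_nat (2*L) + 2*lam)
           / (of_real pi * Gamma (of_nat L + 1) * (Gamma (of_nat (4*L) + 2*lam + 1))\<^sup>2)
           * hyperpFq_reg [of_nat L + 1/2] [of_nat (2*L) + lam + 1, of_nat L - mu + 1] (- k\<^sup>2 / 4)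
           * hyperpFq_reg [of_nat L + 1/2] [of_nat (2*L) + lam + 1, of_nat L + mu + 1] (- k\<^sup>2 / 4))
         sums hyperpFq_reg [1/2, 1/2] [lam + 1, 1 - mu, mu + 1] (- k\<^sup>2)"
proof -
  have lam: "lam \<notin> \<int>\<^sub>\<le>\<^sub>0"
    using add_half_of_nat_notin_nonpos_Ints[OF assms(2), of 0] by simp
  have "(\<lambda>L. expansion_coeff lam L * (- k\<^sup>2 / 4) ^ (2*L)
          * (hyperpFq_reg [of_nat L + 1/2] [of_nat (2*L) + lam + 1, of_nat L - mu + 1] (- k\<^sup>2 / 4)
             * hyperpFq_reg [of_nat L + 1/2] [of_nat (2*L) + lam + 1, of_nat L + mu + 1] (- k\<^sup>2 / 4)))
        sums hyperpFq_reg [1/2, 1/2] [lam + 1, 1 - mu, mu + 1] (- k\<^sup>2)"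
    using has_sum_imp_sums[OF has_sum_product_expansion[OF lam, of "- k\<^sup>2 / 4" mu]] by simp
  then show ?thesis
    unfolding Gamma_coeff_eq_expansion_coeff[OF assms(2)] by (simp only: mult.assoc)
qed

end
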